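(* Let $1 < n \leq m$ and let $W \in \mathbb{R}^{m \times n}$ have rows $w_1,\dots,w_m \in \mathbb{R}^n$. The map $\mathbb{R}^n \to \mathbb{R}^m$, $x \mapsto \operatorname{ReLU}(Wx)$ (with $\operatorname{ReLU}(y)=\max(y,0)$ applied componentwise) is injective if and only if $W$ has a directed spanning set of $\mathbb{R}^n$ with respect to every $x \in \mathbb{R}^n$.
   Context: Directed spanning set (DSS): for a matrix $W$ with rows $w_i \in \mathbb{R}^n$, a subspace (or set) $\Omega \subset \mathbb{R}^n$ and a vector $x \in \mathbb{R}^n$, $W$ has a DSS of $\Omega$ with respect to $x$ if there is a collection of rows $w_i$ of $W$, each satisfying $\langle x, w_i\rangle \geq 0$, whose linear span contains $\Omega$. Equivalently, $W$ has a DSS of $\mathbb{R}^n$ w.r.t. $x$ iff the rows $\{w_i : \langle x,w_i\rangle \ge 0\}$ span $\mathbb{R}^n$. *)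

theory Defs
  imports "HOL-Analysis.Analysis"
begin

definition relu_vec :: "real ^ 'm \<Rightarrow> real ^ 'm" where
  "relu_vec y = (\<chi> i. max (y $ i) 0)"

definition has_DSS :: "real ^ 'n ^ 'm \<Rightarrow> (real ^ 'n) set \<Rightarrow> real ^ 'n \<Rightarrow> bool" where
  "has_DSS W \<Omega> x \<longleftrightarrow>
     (\<exists>I :: 'm set. (\<forall>i\<in>I. x \<bullet> (W $ i) \<ge> 0) \<and> \<Omega> \<subseteq> span ((\<lambda>i. W $ i) ` I))"

end

theory Submission
  imports Defs
begin

text \<open>
  Write \<open>w\<^sub>i\<close> for the rows of \<open>W\<close>. If \<open>x\<close> and \<open>y\<close> have the same image, then on every row
  with \<open>w\<^sub>i \<bullet> (x + y) \<ge> 0\<close> one of \<open>w\<^sub>i \<bullet> x\<close>, \<open>w\<^sub>i \<bullet> y\<close> is nonnegative, so equal ReLU values force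
  \<open>w\<^sub>i \<bullet> (x - y) = 0\<close>; a directed spanning set with respect to \<open>x + y\<close> then gives \<open>x = y\<close>.
  Conversely, if the rows active at \<open>x\<close> lie in a hyperplane \<open>a\<^sup>\<bottom>\<close>, moving \<open>x\<close> a little along
  \<open>a\<close> changes no active value and keeps all (finitely many) inactive values negative,
  so the map is not injective.
\<close>

lemma has_DSS_UNIV_iff:
  "has_DSS W UNIV x \<longleftrightarrow> span ((\<lambda>i. W $ i) ` {i. 0 \<le> x \<bullet> W $ i}) = UNIV"
proof
  assume "has_DSS W UNIV x"
  then obtain I where "\<forall>i\<in>I. 0 \<le> x \<bullet> W $ i" "UNIV \<subseteq> span ((\<lambda>i. W $ i) ` I)"
    unfolding has_DSS_def by blast
  moreover from this(1) have "span ((\<lambda>i. W $ i) ` I) \<subseteq> span ((\<lambda>i. W $ i) ` {i. 0 \<le> x \<bullet> W $ i})"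
    by (intro span_mono) auto
  ultimately show "span ((\<lambda>i. W $ i) ` {i. 0 \<le> x \<bullet> W $ i}) = UNIV"
    by auto
qed (auto simp: has_DSS_def)

lemma relu_vec_matrix_vector_mult:
  "relu_vec (W *v x) = (\<chi> i. max (W $ i \<bullet> x) 0)"
  by (simp add: relu_vec_def matrix_vector_mul_component)

lemma max_zero_eq_imp_eq:
  fixes a b :: real
  assumes "max a 0 = max b 0" and "0 \<le> a + b"
  shows "a = b"
  using assms by (auto simp: max_def split: if_splits)

lemma relu_layer_eq_imp_eq:
  fixes w :: "'i \<Rightarrow> 'a::real_inner"
  assumes same: "\<And>i. max (w i \<bullet> x) 0 = max (w i \<bullet> y) 0"
    and spanning: "span (w ` {i. 0 \<le> (x + y) \<bullet> w i}) = UNIV"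
  shows "x = y"
proof -
  have orth: "orthogonal (x - y) z" if z: "z \<in> w ` {i. 0 \<le> (x + y) \<bullet> w i}" for z
  proof -
    obtain i where i: "z = w i" "0 \<le> (x + y) \<bullet> w i"
      using z by blast
    then have "0 \<le> w i \<bullet> x + w i \<bullet> y"
      by (simp add: inner_add_right inner_commute[of "x + y"])
    then have "w i \<bullet> x = w i \<bullet> y"
      by (rule max_zero_eq_imp_eq[OF same])
    then show ?thesis
      using i(1) by (metis orthogonal_def inner_diff_right inner_commute diff_self)
  qed
  have "orthogonal (x - y) (x - y)"
    using spanning by (intro orthogonal_to_span[OF _ orth]) simp_all
  then show "x = y"
    by (simp add: orthogonal_def)
qed

lemma eventually_inner_neg_along_line:
  fixes w x a :: "'a::real_inner"
  assumes "w \<bullet> x < 0"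
  shows "\<forall>\<^sub>F t in at_right 0. w \<bullet> (x + t *\<^sub>R a) < 0"
proof -
  have "((\<lambda>t. w \<bullet> x + t * (w \<bullet> a)) \<longlongrightarrow> w \<bullet> x + 0 * (w \<bullet> a)) (at_right 0)"
    by (intro tendsto_intros)
  then have "\<forall>\<^sub>F t in at_right 0. w \<bullet> x + t * (w \<bullet> a) < 0"
    using assms by (auto dest: order_tendstoD(2))
  then show ?thesis
    by eventually_elim (simp add: inner_add_right)
qed

lemma relu_layer_perturbation:
  fixes w :: "'i::finite \<Rightarrow> 'a::euclidean_space"
  assumes "span (w ` {i. 0 \<le> x \<bullet> w i}) \<noteq> UNIV"
  obtains y where "y \<noteq> x" and "\<And>i. max (w i \<bullet> y) 0 = max (w i \<bullet> x) 0"
proof -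
  obtain a where "a \<noteq> 0" and a: "span (w ` {i. 0 \<le> x \<bullet> w i}) \<subseteq> {z. a \<bullet> z = 0}"
    using span_not_univ_subset_hyperplane[OF assms] by blast
  have active: "w i \<bullet> a = 0" if "0 \<le> x \<bullet> w i" for i
    using that a span_base[of "w i" "w ` {i. 0 \<le> x \<bullet> w i}"] by (auto simp: inner_commute)
  have "\<forall>\<^sub>F t in at_right (0::real). 0 < t \<and> (\<forall>i. w i \<bullet> x < 0 \<longrightarrow> w i \<bullet> (x + t *\<^sub>R a) < 0)"
    using eventually_at_right_less
    by (intro eventually_conj eventually_all_finite)
      (auto intro: eventually_inner_neg_along_line)
  then obtain t :: real where "0 < t" and inactive: "\<And>i. w i \<bullet> x < 0 \<Longrightarrow> w i \<bullet> (x + t *\<^sub>R a) < 0"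
    using eventually_happens'[OF trivial_limit_at_right_real] by blast
  show thesis
  proof
    show "x + t *\<^sub>R a \<noteq> x"
      using \<open>0 < t\<close> \<open>a \<noteq> 0\<close> by simp
    show "max (w i \<bullet> (x + t *\<^sub>R a)) 0 = max (w i \<bullet> x) 0" for i
      using active[of i] inactive[of i]
      by (cases "0 \<le> x \<bullet> w i") (auto simp: inner_add_right inner_commute)
  qed
qed

theorem relu_layer_inj_iff_spanning:
  fixes w :: "'i::finite \<Rightarrow> 'a::euclidean_space"
  shows "inj (\<lambda>x i. max (w i \<bullet> x) 0) \<longleftrightarrow> (\<forall>x. span (w ` {i. 0 \<le> x \<bullet> w i}) = UNIV)"
proof
  assume inj: "inj (\<lambda>x i. max (w i \<bullet> x) 0)"
  show "\<forall>x. span (w ` {i. 0 \<le> x \<bullet> w i}) = UNIV"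
  proof (rule allI, rule ccontr)
    fix x
    assume "span (w ` {i. 0 \<le> x \<bullet> w i}) \<noteq> UNIV"
    then obtain y where "y \<noteq> x" and same: "\<And>i. max (w i \<bullet> y) 0 = max (w i \<bullet> x) 0"
      by (rule relu_layer_perturbation) auto
    from same have "(\<lambda>i. max (w i \<bullet> y) 0) = (\<lambda>i. max (w i \<bullet> x) 0)"
      by simp
    then have "y = x"
      by (rule injD[OF inj])
    with \<open>y \<noteq> x\<close> show False ..
  qed
next
  assume spanning: "\<forall>x. span (w ` {i. 0 \<le> x \<bullet> w i}) = UNIV"
  show "inj (\<lambda>x i. max (w i \<bullet> x) 0)"
  proof (rule injI)
    fix x y :: 'a
    assume "(\<lambda>i. max (w i \<bullet> x) 0) = (\<lambda>i. max (w i \<bullet> y) 0)"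
    then show "x = y"
      using spanning by (intro relu_layer_eq_imp_eq[of w x y]) (simp_all add: fun_eq_iff)
  qed
qed

theorem theorem1:
  fixes W :: "real ^ 'n ^ 'm"
  assumes "1 < CARD('n)" and "CARD('n) \<le> CARD('m)"
  shows "inj (\<lambda>x :: real ^ 'n. relu_vec (W *v x)) \<longleftrightarrow> (\<forall>x :: real ^ 'n. has_DSS W UNIV x)"
proof -
  have "inj (\<lambda>x :: real ^ 'n. relu_vec (W *v x)) \<longleftrightarrow> inj (\<lambda>x i. max (W $ i \<bullet> x) 0)"
    by (simp add: relu_vec_matrix_vector_mult inj_def vec_lambda_inject)
  also have "\<dots> \<longleftrightarrow> (\<forall>x. has_DSS W UNIV x)"
    by (simp add: relu_layer_inj_iff_spanning has_DSS_UNIV_iff)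
  finally show ?thesis .
qed

end
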